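(* Let $p\ge2$ and $c\ge2$ be integers such that $(p-2)/(c-1)$ is a positive integer, let $d=2^{p-1}$, assume $d\ge 8c(c-1)$, and let $\mu$ be as in the context. Suppose a distribution $\mathcal{D}$ over pairs $(\mathrm{sk},\mathrm{Alg})$ with space complexity $s$ $(1/8,\delta)$-succeeds for Certification, where $\delta\le 1/d$. Then there exist positive integers $k,t$ with $k\ge (d/2)^{1/(c-1)}$ and $kt\le d/2$, and a public-coin one-way protocol $\Pi$ of communication complexity $s$ that $(1/(8c),\delta)$-succeeds for $\textsc{Random-Multi-Index}(k,t)$ on strings of length $d$.
   Context: Let $d=2^{p-1}$. The distribution $\zeta$: sample a uniformly random subset $J_0\subset[d]$ of size $2^{p-2}$; for $i=1,\dots,c-1$, sample $J_i$ uniformly at random among subsets of $J_{i-1}$ of size $2^{-(p-2)/(c-1)}|J_{i-1}|$. Let $x^{(i)}\in\{0,1\}^d$ be the indicator vector of $J_i$, and let $\zeta$ be the distribution of $(x^{(0)},\dots,x^{(c-1)})$. The distribution $\mu$ is the distribution of $\sum_{i=0}^{c-1}x^{(i)}\in\{0,\dots,c\}^d$. The Certification problem: a distribution $\mathcal{D}$ over pairs $(\mathrm{sk},\mathrm{Alg})$, where $\mathrm{sk}\colon\{0,\dots,c\}^{d}\to\{0,1\}^s$ ($s$ is the space complexity) and $\mathrm{Alg}$ takes two strings in $\{0,1\}^s$ and outputs either $\bot$ or a pair $(i,\ell)\in[d]\times[c-1]$. $\mathcal{D}$ $(\alpha,\delta)$-succeeds for Certification if (i) $\Pr_{X,Y\sim\mu,\,(\mathrm{sk},\mathrm{Alg})\sim\mathcal{D}}[\mathrm{Alg}(\mathrm{sk}(X),\mathrm{sk}(Y))\ne\bot]\ge\alpha$,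 with $X,Y$ independent draws from $\mu$; and (ii) for any two points $x,y$ in the support of $\mu$, $\Pr_{(\mathrm{sk},\mathrm{Alg})\sim\mathcal{D}}[\mathrm{Alg}(\mathrm{sk}(x),\mathrm{sk}(y))=(i,\ell)\text{ for some }(i,\ell)\text{ with }\neg(x_i<\ell<y_i)]\le\delta$. For $n\le d$, $S_d(n)$ is the set of vectors in $\{0,1\}^d$ with exactly $n$ ones, and $\mathcal{I}_d(n)$ is the set of subsets of $[d]$ of size exactly $n$. $\textsc{Random-Multi-Index}(k,t)$ on strings of length $d$ (for positive integers $k,t$ with $kt\le d/2$) is the public-coin one-way communication problem in which Alice receives a uniformly random $x\sim S_d(kt)$ and sends a message $m\in\{0,1\}^s$ to Bob ($s$ is the communication complexity); Bob receives an independent uniformly random $I\sim\mathcal{I}_d(t)$ and $m$, and outputs either $\bot$ or an index $i\in I$. A protocol $(\alpha,\delta)$-succeeds if, with probability over $x$, $I$ and the protocol's randomness, (i) Bob outputs an index $i\in I$ with probability at least $\alpha$, and (ii) Bob outputs an index $i\in I$ with $x_i=1$ with probability at most $\delta$. *)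

theory Defs
  imports "HOL-Probability.Probability"
begin

text \<open>Indices of [d] are represented 0-based as {0..<d}; levels l range over {1..c-1}.\<close>

fun chain_pmf :: "nat \<Rightarrow> nat \<Rightarrow> nat set \<Rightarrow> nat set list pmf" where
  "chain_pmf r 0 J = return_pmf []"
| "chain_pmf r (Suc m) J =
     pmf_of_set {J'. J' \<subseteq> J \<and> card J' = card J div 2 ^ r} \<bind>
       (\<lambda>J'. chain_pmf r m J' \<bind> (\<lambda>Js. return_pmf (J' # Js)))"

definition zeta_sets :: "nat \<Rightarrow> nat \<Rightarrow> nat set list pmf" where
  "zeta_sets p c =
     pmf_of_set {J. J \<subseteq> {0..<2 ^ (p - 1)} \<and> card J = 2 ^ (p - 2)} \<bind>
       (\<lambda>J0. chain_pmf ((p - 2) div (c - 1)) (c - 1) J0 \<bind> (\<lambda>Js. return_pmf (J0 # Js)))"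

definition mu :: "nat \<Rightarrow> nat \<Rightarrow> (nat \<Rightarrow> nat) pmf" where
  "mu p c = map_pmf (\<lambda>Js i. sum_list (map (\<lambda>J. if i \<in> J then 1 else 0) Js)) (zeta_sets p c)"

definition vec_dom :: "nat \<Rightarrow> nat \<Rightarrow> (nat \<Rightarrow> nat) set" where
  "vec_dom d c = {x. (\<forall>i<d. x i \<le> c) \<and> (\<forall>i\<ge>d. x i = 0)}"

type_synonym sketch = "(nat \<Rightarrow> nat) \<Rightarrow> bool list"
type_synonym cert_alg = "bool list \<Rightarrow> bool list \<Rightarrow> (nat \<times> nat) option"

definition cert_succeeds ::
  "nat \<Rightarrow> nat \<Rightarrow> nat \<Rightarrow> (sketch \<times> cert_alg) pmf \<Rightarrow> real \<Rightarrow> real \<Rightarrow> bool" where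
  "cert_succeeds p c s D \<alpha> \<delta> \<longleftrightarrow>
     (let d = 2 ^ (p - 1) in
     (\<forall>(sk, Alg) \<in> set_pmf D.
         (\<forall>x \<in> vec_dom d c. length (sk x) = s) \<and>
         (\<forall>a b. length a = s \<longrightarrow> length b = s \<longrightarrow>
             Alg a b \<in> insert None (Some ` ({0..<d} \<times> {1..c - 1})))) \<and>
     measure_pmf.prob
       (mu p c \<bind> (\<lambda>X. mu p c \<bind> (\<lambda>Y. D \<bind> (\<lambda>(sk, Alg). return_pmf (Alg (sk X) (sk Y))))))
       {r. r \<noteq> None} \<ge> \<alpha> \<and>
     (\<forall>x \<in> set_pmf (mu p c). \<forall>y \<in> set_pmf (mu p c).
        measure_pmf.prob D
          {(sk, Alg). \<exists>i l. Alg (sk x) (sk y) = Some (i, l) \<and> \<not> (x i < l \<and> l < y i)} \<le> \<delta>))"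

definition S_vec :: "nat \<Rightarrow> nat \<Rightarrow> (nat \<Rightarrow> bool) set" where
  "S_vec d n = {x. (\<forall>i\<ge>d. \<not> x i) \<and> card {i. x i} = n}"

definition I_sets :: "nat \<Rightarrow> nat \<Rightarrow> nat set set" where
  "I_sets d n = {I. I \<subseteq> {0..<d} \<and> card I = n}"

type_synonym alice = "(nat \<Rightarrow> bool) \<Rightarrow> bool list"
type_synonym bob = "bool list \<Rightarrow> nat set \<Rightarrow> nat option"

text \<open>A public-coin one-way protocol: a distribution over deterministic (Alice, Bob) pairs.\<close>
definition rmi_succeeds ::
  "nat \<Rightarrow> nat \<Rightarrow> nat \<Rightarrow> nat \<Rightarrow> (alice \<times> bob) pmf \<Rightarrow> real \<Rightarrow> real \<Rightarrow> bool" where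
  "rmi_succeeds d k t s Prot \<alpha> \<delta> \<longleftrightarrow>
     (\<forall>(A, B) \<in> set_pmf Prot.
         (\<forall>x \<in> S_vec d (k * t). length (A x) = s) \<and>
         (\<forall>m I. length m = s \<longrightarrow> I \<in> I_sets d t \<longrightarrow> B m I \<in> insert None (Some ` I))) \<and>
     (let E = pmf_of_set (S_vec d (k * t)) \<bind> (\<lambda>x. pmf_of_set (I_sets d t) \<bind> (\<lambda>I.
                Prot \<bind> (\<lambda>(A, B). return_pmf (x, I, B (A x) I)))) in
       measure_pmf.prob E {(x, I, r). \<exists>i. r = Some i \<and> i \<in> I} \<ge> \<alpha> \<and>
       measure_pmf.prob E {(x, I, r). \<exists>i. r = Some i \<and> i \<in> I \<and> x i} \<le> \<delta>)"

end

theory Submission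
  imports Defs
begin

text \<open>
  Write \<open>x\<close> and \<open>y\<close> for the sums of the indicator vectors of two independent chains \<open>X\<close> and \<open>Y\<close>.
  A correct certificate \<open>(i, l)\<close> satisfies \<open>x i < l < y i\<close>, i.e. \<open>i \<notin> X ! (l - 1)\<close> and
  \<open>i \<in> Y ! l\<close>. With \<open>r = (p - 2) div (c - 1)\<close>, the sets \<open>J ! (l - 1)\<close> and \<open>J ! l\<close> of a chain are uniform
  subsets of \<open>[d]\<close> of sizes \<open>k t\<close> and \<open>t\<close>, where \<open>k = 2 ^ r\<close> and \<open>t = 2 ^ (r (c - 1 - l))\<close>. So if
  Alice's input is read as \<open>X ! (l - 1)\<close> and Bob's as \<open>Y ! l\<close>, and public coins complete both to whole
  chains, the players simulate the certification experiment, and every correct certificate of level \<open>l\<close>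
  is a valid answer to Random-Multi-Index. By pigeonhole some level carries certificates with
  probability \<open>1 / (8 (c - 1))\<close>; discarding the wrong ones costs at most \<open>\<delta> \<le> 1 / d\<close>, which leaves
  \<open>1 / (8 c)\<close>.
\<close>

section \<open>Uniform subsets and the chain distribution\<close>

definition subsets_pmf :: "'a set \<Rightarrow> nat \<Rightarrow> 'a set pmf" where
  "subsets_pmf A n = pmf_of_set {J. J \<subseteq> A \<and> card J = n}"

lemma finite_subsets_with_card: "finite A \<Longrightarrow> finite {J. J \<subseteq> A \<and> card J = n}"
  by (rule finite_subset[of _ "Pow A"]) auto

lemma subsets_with_card_nonempty: "finite A \<Longrightarrow> n \<le> card A \<Longrightarrow> {J. J \<subseteq> A \<and> card J = n} \<noteq> {}"
  using obtain_subset_with_card_n[of n A] by blast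

lemma set_subsets_pmf:
  "finite A \<Longrightarrow> n \<le> card A \<Longrightarrow> set_pmf (subsets_pmf A n) = {J. J \<subseteq> A \<and> card J = n}"
  unfolding subsets_pmf_def by (rule set_pmf_of_set[OF subsets_with_card_nonempty finite_subsets_with_card])

lemma pmf_subsets_pmf:
  "finite A \<Longrightarrow> n \<le> card A \<Longrightarrow>
   pmf (subsets_pmf A n) K = (if K \<subseteq> A \<and> card K = n then 1 / real (card A choose n) else 0)"
  unfolding subsets_pmf_def
  by (subst pmf_of_set[OF subsets_with_card_nonempty finite_subsets_with_card])
     (auto simp: indicator_def n_subsets)

lemma card_supersets_with_card:
  assumes "finite A" "K \<subseteq> A" "card K = n'" "n' \<le> n"
  shows "card {J. J \<subseteq> A \<and> card J = n \<and> K \<subseteq> J} = (card A - n') choose (n - n')"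
proof -
  have fK: "finite K" using assms finite_subset by blast
  have "bij_betw (\<lambda>J. J - K) {J. J \<subseteq> A \<and> card J = n \<and> K \<subseteq> J} {B. B \<subseteq> A - K \<and> card B = n - n'}"
  proof (rule bij_betw_byWitness[where f' = "\<lambda>B. B \<union> K"])
    show "(\<lambda>B. B \<union> K) ` {B. B \<subseteq> A - K \<and> card B = n - n'} \<subseteq> {J. J \<subseteq> A \<and> card J = n \<and> K \<subseteq> J}"
    proof (rule image_subsetI)
      fix B assume B: "B \<in> {B. B \<subseteq> A - K \<and> card B = n - n'}"
      then have "finite B" using assms finite_subset by blast
      then have "card (B \<union> K) = card B + card K" using B fK by (subst card_Un_disjoint) auto
      then show "B \<union> K \<in> {J. J \<subseteq> A \<and> card J = n \<and> K \<subseteq> J}" using B assms by auto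
    qed
  qed (use assms fK in \<open>auto simp: card_Diff_subset\<close>)
  then have "card {J. J \<subseteq> A \<and> card J = n \<and> K \<subseteq> J} = card {B. B \<subseteq> A - K \<and> card B = n - n'}"
    by (rule bij_betw_same_card)
  also have "\<dots> = card (A - K) choose (n - n')" using assms by (intro n_subsets) auto
  also have "card (A - K) = card A - n'" using assms fK by (simp add: card_Diff_subset)
  finally show ?thesis .
qed

lemma bind_subsets_pmf_subsets_pmf:
  assumes A: "finite A" and le: "n' \<le> n" "n \<le> card A"
  shows "subsets_pmf A n \<bind> (\<lambda>J. subsets_pmf J n') = subsets_pmf A n'"
proof (rule pmf_eqI)
  fix K
  let ?S = "{J. J \<subseteq> A \<and> card J = n}"
  let ?q = "1 / real (n choose n')"
  have fS: "finite ?S" "?S \<noteq> {}"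
    using finite_subsets_with_card subsets_with_card_nonempty A le by auto
  have "pmf (subsets_pmf A n \<bind> (\<lambda>J. subsets_pmf J n')) K = (\<Sum>J\<in>?S. pmf (subsets_pmf J n') K) / card ?S"
    unfolding pmf_bind subsets_pmf_def[of A n] using fS by (simp add: integral_pmf_of_set)
  also have "(\<Sum>J\<in>?S. pmf (subsets_pmf J n') K) = (\<Sum>J\<in>?S. if K \<subseteq> J \<and> card K = n' then ?q else 0)"
  proof (intro sum.cong refl)
    fix J assume "J \<in> ?S"
    moreover from this have "finite J" using A finite_subset by blast
    ultimately show "pmf (subsets_pmf J n') K = (if K \<subseteq> J \<and> card K = n' then ?q else 0)"
      using le by (simp add: pmf_subsets_pmf)
  qed
  also have "\<dots> = (if K \<subseteq> A \<and> card K = n' then real ((card A - n') choose (n - n')) * ?q else 0)"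
  proof (cases "K \<subseteq> A \<and> card K = n'")
    case True
    have "(\<Sum>J\<in>?S. if K \<subseteq> J \<and> card K = n' then ?q else 0) = (\<Sum>J\<in>{J\<in>?S. K \<subseteq> J}. ?q)"
      using True by (subst sum.inter_filter[OF fS(1), symmetric]) simp
    also have "{J\<in>?S. K \<subseteq> J} = {J. J \<subseteq> A \<and> card J = n \<and> K \<subseteq> J}" by auto
    finally show ?thesis using True A le card_supersets_with_card[of A K n' n] by simp
  next
    case False
    then have "(\<Sum>J\<in>?S. if K \<subseteq> J \<and> card K = n' then ?q else 0) = 0"
      by (intro sum.neutral) force
    then show ?thesis unfolding if_not_P[OF False] .
  qed
  also have "real (card ?S) = real (card A choose n)" using A by (simp add: n_subsets)
  finally have eq: "pmf (subsets_pmf A n \<bind> (\<lambda>J. subsets_pmf J n')) K =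
      (if K \<subseteq> A \<and> card K = n' then real ((card A - n') choose (n - n')) * ?q else 0) / real (card A choose n)" .
  have "real (card A choose n) * real (n choose n') = real (card A choose n') * real ((card A - n') choose (n - n'))"
    using choose_mult[OF le] by (metis of_nat_mult)
  moreover have "(card A choose n) > 0" "(n choose n') > 0" using le by auto
  ultimately show "pmf (subsets_pmf A n \<bind> (\<lambda>J. subsets_pmf J n')) K = pmf (subsets_pmf A n') K"
    unfolding eq using A le by (auto simp: pmf_subsets_pmf field_simps)
qed

lemma map_nth_bind_chain_pmf:
  assumes "finite A" "n \<le> card A" "k < m"
  shows "subsets_pmf A n \<bind> (\<lambda>J. map_pmf (\<lambda>Js. Js ! k) (chain_pmf r m J)) = subsets_pmf A (n div 2 ^ (r * Suc k))"
  using assms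
proof (induction m arbitrary: A n k)
  case 0 then show ?case by simp
next
  case (Suc m)
  let ?n' = "n div 2 ^ r"
  have step: "subsets_pmf A n \<bind> (\<lambda>J. subsets_pmf J ?n') = subsets_pmf A ?n'"
    using Suc.prems by (intro bind_subsets_pmf_subsets_pmf) auto
  have "subsets_pmf A n \<bind> (\<lambda>J. map_pmf (\<lambda>Js. Js ! k) (chain_pmf r (Suc m) J))
      = subsets_pmf A n \<bind> (\<lambda>J. subsets_pmf J ?n' \<bind> (\<lambda>J'. map_pmf (\<lambda>Js. (J' # Js) ! k) (chain_pmf r m J')))"
  proof (intro bind_pmf_cong refl)
    fix J assume "J \<in> set_pmf (subsets_pmf A n)"
    then have "card J = n" using Suc.prems by (simp add: set_subsets_pmf)
    then show "map_pmf (\<lambda>Js. Js ! k) (chain_pmf r (Suc m) J)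
        = subsets_pmf J ?n' \<bind> (\<lambda>J'. map_pmf (\<lambda>Js. (J' # Js) ! k) (chain_pmf r m J'))"
      by (simp add: subsets_pmf_def map_pmf_def bind_assoc_pmf bind_return_pmf)
  qed
  also have "\<dots> = subsets_pmf A (n div 2 ^ (r * Suc k))"
  proof (cases k)
    case 0
    then show ?thesis using step by (simp add: map_pmf_const bind_return_pmf')
  next
    case (Suc k')
    then have "subsets_pmf A n \<bind> (\<lambda>J. subsets_pmf J ?n' \<bind> (\<lambda>J'. map_pmf (\<lambda>Js. (J' # Js) ! k) (chain_pmf r m J')))
       = subsets_pmf A ?n' \<bind> (\<lambda>J'. map_pmf (\<lambda>Js. Js ! k') (chain_pmf r m J'))"
      by (simp add: bind_assoc_pmf flip: step)
    also have "\<dots> = subsets_pmf A (?n' div 2 ^ (r * Suc k'))"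
      using Suc.prems \<open>k = Suc k'\<close> by (intro Suc.IH) (auto intro: order_trans[OF div_le_dividend])
    also have "?n' div 2 ^ (r * Suc k') = n div 2 ^ (r * Suc k)"
      by (simp add: \<open>k = Suc k'\<close> div_mult2_eq power_add)
    finally show ?thesis .
  qed
  finally show ?case .
qed

lemma zeta_sets_eq:
  "zeta_sets p c = subsets_pmf {0..<2 ^ (p - 1)} (2 ^ (p - 2)) \<bind>
      (\<lambda>J0. map_pmf (Cons J0) (chain_pmf ((p - 2) div (c - 1)) (c - 1) J0))"
  by (simp add: zeta_sets_def subsets_pmf_def map_pmf_def)

lemma map_nth_zeta_sets:
  assumes "p \<ge> 2" "r * (c - 1) = p - 2" "m < c"
  shows "map_pmf (\<lambda>Js. Js ! m) (zeta_sets p c) = subsets_pmf {0..<2 ^ (p - 1)} (2 ^ (r * (c - 1 - m)))"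
proof (cases m)
  case 0
  then show ?thesis using assms
    by (simp add: zeta_sets_eq map_bind_pmf pmf.map_comp o_def map_pmf_const bind_return_pmf')
next
  case (Suc m')
  have le: "r * m \<le> r * (c - 1)" by (intro mult_le_mono2) (use assms(3) in simp)
  have "c - 1 > 0" using assms Suc by simp
  then have r: "(p - 2) div (c - 1) = r" by (simp flip: assms(2))
  have "2 ^ (p - 2) \<le> card {0..<(2::nat) ^ (p - 1)}" by (simp add: power_increasing)
  then have "map_pmf (\<lambda>Js. Js ! m) (zeta_sets p c) = subsets_pmf {0..<2 ^ (p - 1)} (2 ^ (p - 2) div 2 ^ (r * m))"
    unfolding zeta_sets_eq r using assms Suc
    by (simp add: map_bind_pmf pmf.map_comp o_def map_nth_bind_chain_pmf)
  also have "(2::nat) ^ (p - 2) div 2 ^ (r * m) = 2 ^ (r * (c - 1) - r * m)"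
    using le by (simp flip: assms(2) add: power_diff)
  also have "r * (c - 1) - r * m = r * (c - 1 - m)" by (simp add: diff_mult_distrib2)
  finally show ?thesis .
qed

lemma set_pmf_chain_pmf:
  assumes "Js \<in> set_pmf (chain_pmf r m J)" "finite J"
  shows "length Js = m \<and> sorted_wrt (\<supseteq>) (J # Js)"
  using assms
proof (induction m arbitrary: J Js)
  case 0 then show ?case by simp
next
  case (Suc m)
  from Suc.prems obtain J' Js' where "J' \<subseteq> J" "Js' \<in> set_pmf (chain_pmf r m J')" "Js = J' # Js'"
    using set_pmf_of_set[OF subsets_with_card_nonempty finite_subsets_with_card, of J "card J div 2 ^ r"]
    by auto
  moreover from this have "length Js' = m \<and> sorted_wrt (\<supseteq>) (J' # Js')"
    using Suc finite_subset by blast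
  ultimately show ?case by auto
qed

lemma set_pmf_zeta_sets:
  assumes "Js \<in> set_pmf (zeta_sets p c)" "c \<ge> 1"
  shows "length Js = c" "sorted_wrt (\<supseteq>) Js" "\<forall>J\<in>set Js. J \<subseteq> {0..<2 ^ (p - 1)}"
proof -
  have "2 ^ (p - 2) \<le> card {0..<(2::nat) ^ (p - 1)}" by (simp add: power_increasing)
  with assms obtain J0 Js' where J0: "J0 \<subseteq> {0..<2 ^ (p - 1)}" and eq: "Js = J0 # Js'"
    and "Js' \<in> set_pmf (chain_pmf ((p - 2) div (c - 1)) (c - 1) J0)"
    unfolding zeta_sets_eq by (auto simp: set_subsets_pmf)
  with set_pmf_chain_pmf have "length Js' = c - 1" "sorted_wrt (\<supseteq>) Js"
    using finite_subset by blast+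
  with eq J0 assms(2) show "length Js = c" "sorted_wrt (\<supseteq>) Js" "\<forall>J\<in>set Js. J \<subseteq> {0..<2 ^ (p - 1)}"
    by auto
qed

definition level_vec :: "nat set list \<Rightarrow> nat \<Rightarrow> nat" where
  "level_vec Js i = sum_list (map (\<lambda>J. if i \<in> J then 1 else 0) Js)"

lemma mu_eq_map_level_vec: "mu p c = map_pmf level_vec (zeta_sets p c)"
  unfolding mu_def level_vec_def[abs_def] ..

lemma level_vec_eq_sum: "level_vec Js i = (\<Sum>j<length Js. if i \<in> Js ! j then 1 else 0)"
  unfolding level_vec_def by (simp add: sum_list_sum_nth atLeast0LessThan)

lemma level_vec_gt:
  assumes "sorted_wrt (\<supseteq>) Js" "m < length Js" "i \<in> Js ! m"
  shows "m < level_vec Js i"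
proof -
  have "Js ! m \<subseteq> Js ! j" if "j \<le> m" for j
    using assms that by (cases "j = m") (auto simp: sorted_wrt_iff_nth_less)
  then have "i \<in> Js ! j" if "j \<le> m" for j
    using assms that by blast
  then have "(\<Sum>j<Suc m. 1) = (\<Sum>j<Suc m. if i \<in> Js ! j then 1 else (0::nat))"
    by (intro sum.cong) auto
  also have "\<dots> \<le> (\<Sum>j<length Js. if i \<in> Js ! j then 1 else 0)"
    using assms by (intro sum_mono2) auto
  finally show ?thesis by (simp add: level_vec_eq_sum)
qed

lemma level_vec_le:
  assumes "sorted_wrt (\<supseteq>) Js" "m < length Js" "i \<notin> Js ! m"
  shows "level_vec Js i \<le> m"
proof -
  have "Js ! j \<subseteq> Js ! m" if "m \<le> j" "j < length Js" for j
    using assms that by (cases "j = m") (auto simp: sorted_wrt_iff_nth_less)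
  then have "i \<notin> Js ! j" if "m \<le> j" "j < length Js" for j
    using assms that by blast
  then have "(\<Sum>j<length Js. if i \<in> Js ! j then 1 else 0) = (\<Sum>j<m. if i \<in> Js ! j then 1 else (0::nat))"
    using assms by (intro sum.mono_neutral_right) auto
  also have "\<dots> \<le> (\<Sum>j<m. 1)" by (intro sum_mono) auto
  finally show ?thesis by (simp add: level_vec_eq_sum)
qed

lemma level_vec_in_vec_dom:
  assumes "Js \<in> set_pmf (zeta_sets p c)" "c \<ge> 1"
  shows "level_vec Js \<in> vec_dom (2 ^ (p - 1)) c"
proof -
  note Js = set_pmf_zeta_sets[OF assms]
  have "level_vec Js i \<le> (\<Sum>j<length Js. 1)" for i
    unfolding level_vec_eq_sum by (intro sum_mono) auto
  moreover have "level_vec Js i = 0" if "i \<ge> 2 ^ (p - 1)" for i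
  proof -
    have "\<forall>J\<in>set Js. i \<notin> J" using Js(3) that by (meson atLeastLessThan_iff not_le subsetD)
    then show ?thesis unfolding level_vec_def by (induction Js) auto
  qed
  ultimately show ?thesis using Js(1) unfolding vec_dom_def by auto
qed

lemma measure_pmf_bind_le:
  assumes "\<And>x. x \<in> set_pmf M \<Longrightarrow> measure_pmf.prob (f x) A \<le> \<delta>"
  shows "measure_pmf.prob (M \<bind> f) A \<le> \<delta>"
proof -
  obtain x0 where "x0 \<in> set_pmf M" using set_pmf_not_empty[of M] by auto
  then have "\<delta> \<ge> 0" using assms[of x0] measure_nonneg[of "measure_pmf (f x0)" A] by linarith
  have "emeasure (measure_pmf (M \<bind> f)) A = (\<integral>\<^sup>+x. emeasure (f x) A \<partial>M)" by simp
  also have "\<dots> \<le> (\<integral>\<^sup>+x. ennreal \<delta> \<partial>M)"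
    using assms by (intro nn_integral_mono_AE)
      (auto simp: AE_measure_pmf_iff measure_pmf.emeasure_eq_measure intro: ennreal_leI)
  finally show ?thesis using \<open>\<delta> \<ge> 0\<close> by (simp add: measure_pmf.emeasure_eq_measure)
qed

lemma measure_pmf_mono_on_set_pmf:
  "A \<inter> set_pmf M \<subseteq> B \<Longrightarrow> measure_pmf.prob M A \<le> measure_pmf.prob M B"
  by (intro measure_pmf.finite_measure_mono_AE) (auto simp: AE_measure_pmf_iff)

lemma bind_Pi_pmf_component:
  assumes "finite A" "a \<in> A"
  shows "Pi_pmf A dflt P \<bind> (\<lambda>F. G (F a)) = P a \<bind> G"
proof -
  have "Pi_pmf A dflt P \<bind> (\<lambda>F. G (F a)) = map_pmf (\<lambda>F. F a) (Pi_pmf A dflt P) \<bind> G"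
    by (simp add: bind_map_pmf)
  also have "\<dots> = P a \<bind> G" using assms by (simp add: Pi_pmf_component)
  finally show ?thesis .
qed

lemma bind_map_pmf_cond_pmf:
  "map_pmf f Z \<bind> (\<lambda>S. cond_pmf Z {z. f z = S} \<bind> G S) = Z \<bind> (\<lambda>z. G (f z) z)"
proof -
  have "map_pmf f Z \<bind> (\<lambda>S. cond_pmf Z {z. f z = S} \<bind> G S)
      = map_pmf f Z \<bind> (\<lambda>S. cond_pmf Z {z. f z = S} \<bind> (\<lambda>z. G (f z) z))"
  proof (intro bind_pmf_cong refl)
    fix S z assume "S \<in> set_pmf (map_pmf f Z)" "z \<in> set_pmf (cond_pmf Z {z. f z = S})"
    then show "G S z = G (f z) z" by (subst (asm) set_cond_pmf) auto
  qed
  also have "\<dots> = (map_pmf f Z \<bind> (\<lambda>S. cond_pmf Z {z. f z = S})) \<bind> (\<lambda>z. G (f z) z)"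
    by (simp add: bind_assoc_pmf)
  also have "map_pmf f Z \<bind> (\<lambda>S. cond_pmf Z {z. f z = S}) = Z"
    by (rule bind_cond_pmf_cancel)
       (auto simp: eq_commute intro!: arg_cong[where f = "measure_pmf.prob Z"])
  finally show ?thesis .
qed

text \<open>Shared randomness can fix, for every possible input, a completion drawn from \<open>Z\<close> conditioned
  on that input. Feeding two independent inputs \<open>fX X\<close>, \<open>fY Y\<close> through these completions yields two
  independent samples of \<open>Z\<close>.\<close>
lemma bind_Pi_pmf_cond_pmf:
  assumes "finite AX" "set_pmf (map_pmf fX Z) \<subseteq> AX" "finite AY" "set_pmf (map_pmf fY Z) \<subseteq> AY"
  shows "map_pmf fX Z \<bind> (\<lambda>S. map_pmf fY Z \<bind> (\<lambda>I.
           Pi_pmf AX dX (\<lambda>S. cond_pmf Z {z. fX z = S}) \<bind> (\<lambda>FX.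
           Pi_pmf AY dY (\<lambda>I. cond_pmf Z {z. fY z = I}) \<bind> (\<lambda>FY. G S I (FX S) (FY I)))))
       = Z \<bind> (\<lambda>X. Z \<bind> (\<lambda>Y. G (fX X) (fY Y) X Y))"
proof -
  have completion: "Pi_pmf AX dX (\<lambda>S. cond_pmf Z {z. fX z = S}) \<bind> (\<lambda>FX.
          Pi_pmf AY dY (\<lambda>I. cond_pmf Z {z. fY z = I}) \<bind> (\<lambda>FY. G S I (FX S) (FY I)))
      = cond_pmf Z {z. fX z = S} \<bind> (\<lambda>X. cond_pmf Z {z. fY z = I} \<bind> G S I X)"
    if "S \<in> AX" "I \<in> AY" for S I
    using assms that
    by (simp add: bind_Pi_pmf_component[where G = "\<lambda>Y. G S I _ Y"]
        bind_Pi_pmf_component[where G = "\<lambda>X. cond_pmf Z {z. fY z = I} \<bind> G S I X"])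
  then have "map_pmf fX Z \<bind> (\<lambda>S. map_pmf fY Z \<bind> (\<lambda>I.
           Pi_pmf AX dX (\<lambda>S. cond_pmf Z {z. fX z = S}) \<bind> (\<lambda>FX.
           Pi_pmf AY dY (\<lambda>I. cond_pmf Z {z. fY z = I}) \<bind> (\<lambda>FY. G S I (FX S) (FY I)))))
      = map_pmf fX Z \<bind> (\<lambda>S. map_pmf fY Z \<bind> (\<lambda>I.
           cond_pmf Z {z. fX z = S} \<bind> (\<lambda>X. cond_pmf Z {z. fY z = I} \<bind> G S I X)))"
    using assms by (intro bind_pmf_cong refl) (auto intro!: completion)
  also have "\<dots> = map_pmf fX Z \<bind> (\<lambda>S. cond_pmf Z {z. fX z = S} \<bind> (\<lambda>X.
           map_pmf fY Z \<bind> (\<lambda>I. cond_pmf Z {z. fY z = I} \<bind> G S I X)))"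
    by (subst bind_commute_pmf) (rule refl)
  also have "\<dots> = Z \<bind> (\<lambda>X. Z \<bind> (\<lambda>Y. G (fX X) (fY Y) X Y))"
    by (simp only: bind_map_pmf_cond_pmf)
  finally show ?thesis .
qed

section \<open>The certification experiment\<close>

definition cert_trial ::
  "nat \<Rightarrow> nat \<Rightarrow> (sketch \<times> cert_alg) pmf \<Rightarrow> (nat set list \<times> nat set list \<times> sketch \<times> cert_alg) pmf" where
  "cert_trial p c D =
     zeta_sets p c \<bind> (\<lambda>Xs. zeta_sets p c \<bind> (\<lambda>Ys. map_pmf (\<lambda>(sk, Alg). (Xs, Ys, sk, Alg)) D))"

definition cert_answer :: "nat set list \<times> nat set list \<times> sketch \<times> cert_alg \<Rightarrow> (nat \<times> nat) option" where
  "cert_answer = (\<lambda>(Xs, Ys, sk, Alg). Alg (sk (level_vec Xs)) (sk (level_vec Ys)))"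

definition cert_error :: "nat set list \<times> nat set list \<times> sketch \<times> cert_alg \<Rightarrow> bool" where
  "cert_error = (\<lambda>(Xs, Ys, sk, Alg).
     \<exists>i l. Alg (sk (level_vec Xs)) (sk (level_vec Ys)) = Some (i, l) \<and>
            \<not> (level_vec Xs i < l \<and> l < level_vec Ys i))"

lemma set_pmf_cert_trial:
  "(Xs, Ys, sk, Alg) \<in> set_pmf (cert_trial p c D) \<longleftrightarrow>
     Xs \<in> set_pmf (zeta_sets p c) \<and> Ys \<in> set_pmf (zeta_sets p c) \<and> (sk, Alg) \<in> set_pmf D"
  by (auto simp: cert_trial_def)

lemma cert_answer_distribution:
  "mu p c \<bind> (\<lambda>X. mu p c \<bind> (\<lambda>Y. D \<bind> (\<lambda>(sk, Alg). return_pmf (Alg (sk X) (sk Y)))))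
     = map_pmf cert_answer (cert_trial p c D)"
  unfolding cert_trial_def mu_eq_map_level_vec
  by (simp only: bind_map_pmf map_bind_pmf pmf.map_comp)
     (simp add: map_pmf_def o_def case_prod_unfold cert_answer_def)

lemma
  assumes "cert_succeeds p c s D \<alpha> \<delta>" "(sk, Alg) \<in> set_pmf D"
  shows cert_succeeds_sketch_length: "x \<in> vec_dom (2 ^ (p - 1)) c \<Longrightarrow> length (sk x) = s"
    and cert_succeeds_answer_range: "length a = s \<Longrightarrow> length b = s \<Longrightarrow>
          Alg a b \<in> insert None (Some ` ({0..<2 ^ (p - 1)} \<times> {1..c - 1}))"
  using bspec[OF assms(1)[unfolded cert_succeeds_def Let_def, THEN conjunct1] assms(2)] by simp_all

lemma cert_succeeds_answer_prob:
  "cert_succeeds p c s D \<alpha> \<delta> \<Longrightarrow> \<alpha> \<le> measure_pmf.prob (cert_trial p c D) {\<omega>. cert_answer \<omega> \<noteq> None}"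
  unfolding cert_succeeds_def Let_def cert_answer_distribution by (simp add: vimage_def)

lemma cert_succeeds_error_prob:
  assumes "cert_succeeds p c s D \<alpha> \<delta>" "x \<in> set_pmf (mu p c)" "y \<in> set_pmf (mu p c)"
  shows "measure_pmf.prob D {(sk, Alg). \<exists>i l. Alg (sk x) (sk y) = Some (i, l) \<and> \<not> (x i < l \<and> l < y i)} \<le> \<delta>"
  using assms(1)[unfolded cert_succeeds_def Let_def, THEN conjunct2, THEN conjunct2] assms(2,3) by blast

lemma prob_cert_error_le:
  assumes "cert_succeeds p c s D \<alpha> \<delta>"
  shows "measure_pmf.prob (cert_trial p c D) {\<omega>. cert_error \<omega>} \<le> \<delta>"
  unfolding cert_trial_def
proof (intro measure_pmf_bind_le)
  fix Xs Ys assume "Xs \<in> set_pmf (zeta_sets p c)" "Ys \<in> set_pmf (zeta_sets p c)"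
  then have "level_vec Xs \<in> set_pmf (mu p c)" "level_vec Ys \<in> set_pmf (mu p c)"
    by (auto simp: mu_eq_map_level_vec)
  from cert_succeeds_error_prob[OF assms this] show "measure_pmf.prob (map_pmf (\<lambda>(sk, Alg). (Xs, Ys, sk, Alg)) D) {\<omega>. cert_error \<omega>} \<le> \<delta>"
    by (simp add: vimage_def case_prod_unfold cert_error_def)
qed

lemma cert_answer_in_range:
  assumes "cert_succeeds p c s D \<alpha> \<delta>" "c \<ge> 1" "\<omega> \<in> set_pmf (cert_trial p c D)"
  shows "cert_answer \<omega> \<in> insert None (Some ` ({0..<2 ^ (p - 1)} \<times> {1..c - 1}))"
proof -
  obtain Xs Ys sk Alg where \<omega>: "\<omega> = (Xs, Ys, sk, Alg)" by (cases \<omega>)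
  with assms(3) have "level_vec Xs \<in> vec_dom (2 ^ (p - 1)) c" "level_vec Ys \<in> vec_dom (2 ^ (p - 1)) c"
    "(sk, Alg) \<in> set_pmf D"
    using level_vec_in_vec_dom assms(2) by (auto simp: set_pmf_cert_trial)
  then show ?thesis
    unfolding \<omega> cert_answer_def prod.case
    by (intro cert_succeeds_answer_range[OF assms(1)]) (auto intro: cert_succeeds_sketch_length[OF assms(1)])
qed

lemma exists_level_with_answer_prob_ge:
  assumes "cert_succeeds p c s D \<alpha> \<delta>" "c \<ge> 2"
  shows "\<exists>l\<in>{1..c - 1}. \<alpha> / (real c - 1) \<le>
           measure_pmf.prob (cert_trial p c D) {\<omega>. \<exists>i. cert_answer \<omega> = Some (i, l)}"
proof (rule ccontr)
  let ?M = "cert_trial p c D"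
  let ?E = "\<lambda>l. {\<omega>. \<exists>i. cert_answer \<omega> = Some (i, l)}"
  assume "\<not> ?thesis"
  then have "(\<Sum>l\<in>{1..c - 1}. measure_pmf.prob ?M (?E l)) < (\<Sum>l\<in>{1..c - 1}. \<alpha> / (real c - 1))"
    using assms(2) by (intro sum_strict_mono) (auto simp: not_le)
  also have "\<dots> = \<alpha>" using assms(2) by (simp add: of_nat_diff)
  also have "\<alpha> \<le> measure_pmf.prob ?M {\<omega>. cert_answer \<omega> \<noteq> None}"
    using assms(1) by (rule cert_succeeds_answer_prob)
  also have "\<dots> \<le> measure_pmf.prob ?M (\<Union>l\<in>{1..c - 1}. ?E l)"
  proof (intro measure_pmf_mono_on_set_pmf subsetI)
    fix \<omega> assume "\<omega> \<in> {\<omega>. cert_answer \<omega> \<noteq> None} \<inter> set_pmf ?M"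
    with cert_answer_in_range[OF assms(1)] assms(2) obtain i l
      where "cert_answer \<omega> = Some (i, l)" "l \<in> {1..c - 1}" by fastforce
    then show "\<omega> \<in> (\<Union>l\<in>{1..c - 1}. ?E l)" by blast
  qed
  also have "\<dots> \<le> (\<Sum>l\<in>{1..c - 1}. measure_pmf.prob ?M (?E l))"
    by (rule measure_pmf.finite_measure_subadditive_finite) auto
  finally show False by simp
qed

section \<open>Reduction to Random-Multi-Index\<close>

lemma S_vec_eq_image_I_sets: "S_vec d n = (\<lambda>S i. i \<in> S) ` I_sets d n"
proof
  show "S_vec d n \<subseteq> (\<lambda>S i. i \<in> S) ` I_sets d n"
  proof
    fix x assume x: "x \<in> S_vec d n"
    then have "{i. x i} \<in> I_sets d n"
      unfolding S_vec_def I_sets_def by (auto simp flip: not_le)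
    then show "x \<in> (\<lambda>S i. i \<in> S) ` I_sets d n" by force
  qed
qed (auto simp: S_vec_def I_sets_def)

lemma pmf_of_set_S_vec:
  assumes "n \<le> d"
  shows "pmf_of_set (S_vec d n) = map_pmf (\<lambda>S i. i \<in> S) (subsets_pmf {0..<d} n)"
proof -
  have "{J. J \<subseteq> {0..<d} \<and> card J = n} \<noteq> {}"
    using assms by (intro subsets_with_card_nonempty) auto
  then show ?thesis
    unfolding S_vec_eq_image_I_sets subsets_pmf_def I_sets_def
    by (intro map_pmf_of_set_inj[symmetric]) (auto simp: inj_on_def fun_eq_iff finite_subsets_with_card)
qed

definition level_answer :: "nat \<Rightarrow> nat set \<Rightarrow> (nat \<times> nat) option \<Rightarrow> nat option" where
  "level_answer l I a = (case a of Some (i, l') \<Rightarrow> if l' = l \<and> i \<in> I then Some i else None | None \<Rightarrow> None)"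

text \<open>Alice's set plays the role of \<open>X ! (l - 1)\<close> and Bob's set that of \<open>Y ! l\<close>. The public coins complete
  each of them to a whole chain, the players run the certification sketch on the two completions, and
  Bob keeps only certificates of level \<open>l\<close> pointing into his set.\<close>
definition level_protocol :: "nat \<Rightarrow> nat \<Rightarrow> nat \<Rightarrow> (sketch \<times> cert_alg) pmf \<Rightarrow> (alice \<times> bob) pmf" where
  "level_protocol p c l D =
     Pi_pmf (Pow {0..<2 ^ (p - 1)}) [] (\<lambda>S. cond_pmf (zeta_sets p c) {Js. Js ! (l - 1) = S}) \<bind> (\<lambda>FX.
     Pi_pmf (Pow {0..<2 ^ (p - 1)}) [] (\<lambda>I. cond_pmf (zeta_sets p c) {Js. Js ! l = I}) \<bind> (\<lambda>FY.
     map_pmf (\<lambda>(sk, Alg). (\<lambda>x. sk (level_vec (FX {i. x i})),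
                          \<lambda>m I. level_answer l I (Alg m (sk (level_vec (FY I)))))) D))"

definition level_outcome ::
  "nat \<Rightarrow> nat set list \<times> nat set list \<times> sketch \<times> cert_alg \<Rightarrow> (nat \<Rightarrow> bool) \<times> nat set \<times> nat option" where
  "level_outcome l = (\<lambda>(Xs, Ys, sk, Alg).
     (\<lambda>i. i \<in> Xs ! (l - 1), Ys ! l, level_answer l (Ys ! l) (Alg (sk (level_vec Xs)) (sk (level_vec Ys)))))"

definition rmi_experiment :: "nat \<Rightarrow> nat \<Rightarrow> nat \<Rightarrow> (alice \<times> bob) pmf \<Rightarrow> ((nat \<Rightarrow> bool) \<times> nat set \<times> nat option) pmf" where
  "rmi_experiment d n t Prot = pmf_of_set (S_vec d n) \<bind> (\<lambda>x. pmf_of_set (I_sets d t) \<bind> (\<lambda>I.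
     Prot \<bind> (\<lambda>(A, B). return_pmf (x, I, B (A x) I))))"

lemma two_pow_level_le: "r * (c - 1) = p - 2 \<Longrightarrow> j \<le> c - 1 \<Longrightarrow> (2::nat) ^ (r * j) \<le> 2 ^ (p - 2)"
  by (metis mult_le_mono2 one_le_numeral power_increasing)

lemma two_pow_level_mult: "1 \<le> l \<Longrightarrow> l < c \<Longrightarrow> (2::nat) ^ r * 2 ^ (r * (c - 1 - l)) = 2 ^ (r * (c - l))"
  by (simp flip: power_add mult_Suc_right add: Suc_diff_Suc)

lemma rmi_experiment_level_protocol:
  assumes "p \<ge> 2" "r * (c - 1) = p - 2" "1 \<le> l" "l < c"
  shows "rmi_experiment (2 ^ (p - 1)) (2 ^ (r * (c - l))) (2 ^ (r * (c - 1 - l))) (level_protocol p c l D)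
       = map_pmf (level_outcome l) (cert_trial p c D)"
proof -
  define d n t where "d = (2::nat) ^ (p - 1)" and "n = (2::nat) ^ (r * (c - l))" and "t = (2::nat) ^ (r * (c - 1 - l))"
  define Z where "Z = zeta_sets p c"
  define G where "G = (\<lambda>S I Xs Ys. D \<bind> (\<lambda>(sk, Alg).
     return_pmf ((\<lambda>i. i \<in> (S :: nat set)), I, level_answer l I (Alg (sk (level_vec Xs)) (sk (level_vec Ys))))))"
  have "n \<le> 2 ^ (p - 2)" "t \<le> 2 ^ (p - 2)"
    unfolding n_def t_def using assms(3) by (intro two_pow_level_le[OF assms(2)]; simp)+
  moreover have "2 ^ (p - 2) \<le> d" unfolding d_def by (simp add: power_increasing)
  ultimately have "n \<le> d" "t \<le> d" by linarith+
  have LX: "map_pmf (\<lambda>Js. Js ! (l - 1)) Z = subsets_pmf {0..<d} n"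
    using map_nth_zeta_sets[OF assms(1,2), of "l - 1"] assms(3,4) by (simp add: Z_def d_def n_def)
  have LY: "map_pmf (\<lambda>Js. Js ! l) Z = subsets_pmf {0..<d} t"
    using map_nth_zeta_sets[OF assms(1,2,4)] by (simp add: Z_def d_def t_def)
  have "rmi_experiment d n t (level_protocol p c l D) = map_pmf (\<lambda>Js. Js ! (l - 1)) Z \<bind> (\<lambda>S.
      map_pmf (\<lambda>Js. Js ! l) Z \<bind> (\<lambda>I. level_protocol p c l D \<bind> (\<lambda>(A, B).
      return_pmf (\<lambda>i. i \<in> S, I, B (A (\<lambda>i. i \<in> S)) I))))"
    unfolding rmi_experiment_def LX LY pmf_of_set_S_vec[OF \<open>n \<le> d\<close>]
    by (simp add: bind_map_pmf subsets_pmf_def I_sets_def)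
  also have "\<dots> = map_pmf (\<lambda>Js. Js ! (l - 1)) Z \<bind> (\<lambda>S. map_pmf (\<lambda>Js. Js ! l) Z \<bind> (\<lambda>I.
      Pi_pmf (Pow {0..<d}) [] (\<lambda>S. cond_pmf Z {Js. Js ! (l - 1) = S}) \<bind> (\<lambda>FX.
      Pi_pmf (Pow {0..<d}) [] (\<lambda>I. cond_pmf Z {Js. Js ! l = I}) \<bind> (\<lambda>FY. G S I (FX S) (FY I)))))"
    unfolding level_protocol_def G_def Z_def d_def
    by (simp add: bind_assoc_pmf map_pmf_def bind_return_pmf case_prod_unfold)
  also have "\<dots> = Z \<bind> (\<lambda>Xs. Z \<bind> (\<lambda>Ys. G (Xs ! (l - 1)) (Ys ! l) Xs Ys))"
  proof (rule bind_Pi_pmf_cond_pmf)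
    show "set_pmf (map_pmf (\<lambda>Js. Js ! (l - 1)) Z) \<subseteq> Pow {0..<d}"
      unfolding LX using \<open>n \<le> d\<close> by (auto simp: set_subsets_pmf)
    show "set_pmf (map_pmf (\<lambda>Js. Js ! l) Z) \<subseteq> Pow {0..<d}"
      unfolding LY using \<open>t \<le> d\<close> by (auto simp: set_subsets_pmf)
  qed simp_all
  also have "\<dots> = map_pmf (level_outcome l) (cert_trial p c D)"
    unfolding cert_trial_def G_def Z_def
    by (simp add: map_bind_pmf map_pmf_def bind_assoc_pmf bind_return_pmf level_outcome_def case_prod_unfold)
  finally show ?thesis by (simp add: d_def n_def t_def)
qed

lemma level_protocol_wf:
  assumes "cert_succeeds p c s D \<alpha> \<delta>" "p \<ge> 2" "r * (c - 1) = p - 2" "1 \<le> l" "l < c"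
    and "(A, B) \<in> set_pmf (level_protocol p c l D)"
  shows "\<forall>x\<in>S_vec (2 ^ (p - 1)) (2 ^ (r * (c - l))). length (A x) = s"
    and "B m I \<in> insert None (Some ` I)"
proof -
  define Z where "Z = zeta_sets p c"
  obtain FX FY sk Alg
    where FX: "FX \<in> set_pmf (Pi_pmf (Pow {0..<2 ^ (p - 1)}) [] (\<lambda>S. cond_pmf Z {Js. Js ! (l - 1) = S}))"
      and sk: "(sk, Alg) \<in> set_pmf D"
      and A: "A = (\<lambda>x. sk (level_vec (FX {i. x i})))"
      and B: "B = (\<lambda>m I. level_answer l I (Alg m (sk (level_vec (FY I)))))"
    using assms(6) unfolding level_protocol_def Z_def by auto
  show "B m I \<in> insert None (Some ` I)"
    unfolding B level_answer_def by (auto split: option.splits)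
  show "\<forall>x\<in>S_vec (2 ^ (p - 1)) (2 ^ (r * (c - l))). length (A x) = s"
  proof
    fix x assume "x \<in> S_vec (2 ^ (p - 1)) (2 ^ (r * (c - l)))"
    then obtain S where S: "S \<in> I_sets (2 ^ (p - 1)) (2 ^ (r * (c - l)))" and x: "x = (\<lambda>i. i \<in> S)"
      unfolding S_vec_eq_image_I_sets by blast
    have "2 ^ (r * (c - l)) \<le> (2::nat) ^ (p - 2)"
      using assms(4) by (intro two_pow_level_le[OF assms(3)]) simp
    also have "\<dots> \<le> card {0..<(2::nat) ^ (p - 1)}" by (simp add: power_increasing)
    finally have "2 ^ (r * (c - l)) \<le> card {0..<(2::nat) ^ (p - 1)}" .
    then have "S \<in> set_pmf (map_pmf (\<lambda>Js. Js ! (l - 1)) Z)"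
      using S map_nth_zeta_sets[OF assms(2,3), of "l - 1"] assms(4,5)
      by (simp add: Z_def set_subsets_pmf I_sets_def)
    then have "set_pmf Z \<inter> {Js. Js ! (l - 1) = S} \<noteq> {}" by auto
    moreover have "FX S \<in> set_pmf (cond_pmf Z {Js. Js ! (l - 1) = S})"
      using FX S by (auto simp: set_Pi_pmf PiE_dflt_def I_sets_def)
    ultimately have "FX S \<in> set_pmf Z" by (simp add: set_cond_pmf)
    then show "length (A x) = s"
      unfolding A x Z_def using assms(5)
      by (intro cert_succeeds_sketch_length[OF assms(1) sk] level_vec_in_vec_dom) simp_all
  qed
qed

text \<open>A certificate \<open>(i, l)\<close> with \<open>i \<notin> Y ! l\<close> is wrong, as then \<open>level_vec Y i \<le> l\<close>.\<close>
lemma prob_level_outcome_hit_ge: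
  assumes "cert_succeeds p c s D \<alpha> \<delta>" "l < c"
    and "q \<le> measure_pmf.prob (cert_trial p c D) {\<omega>. \<exists>i. cert_answer \<omega> = Some (i, l)}"
  shows "q - \<delta> \<le> measure_pmf.prob (map_pmf (level_outcome l) (cert_trial p c D))
                    {(x, I, r). \<exists>i. r = Some i \<and> i \<in> I}"
proof -
  let ?M = "cert_trial p c D"
  let ?H = "level_outcome l -` {(x, I, r). \<exists>i. r = Some i \<and> i \<in> I}"
  have "{\<omega>. \<exists>i. cert_answer \<omega> = Some (i, l)} \<inter> set_pmf ?M \<subseteq> ?H \<union> {\<omega>. cert_error \<omega>}"
  proof
    fix \<omega> assume \<omega>: "\<omega> \<in> {\<omega>. \<exists>i. cert_answer \<omega> = Some (i, l)} \<inter> set_pmf ?M"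
    obtain Xs Ys sk Alg where \<omega>_eq: "\<omega> = (Xs, Ys, sk, Alg)" by (cases \<omega>)
    from \<omega> obtain i where i: "Alg (sk (level_vec Xs)) (sk (level_vec Ys)) = Some (i, l)"
      and "Ys \<in> set_pmf (zeta_sets p c)"
      by (auto simp: \<omega>_eq cert_answer_def set_pmf_cert_trial)
    then have Ys: "sorted_wrt (\<supseteq>) Ys" "length Ys = c"
      using set_pmf_zeta_sets assms(2) by auto
    show "\<omega> \<in> ?H \<union> {\<omega>. cert_error \<omega>}"
    proof (cases "i \<in> Ys ! l")
      case True
      then show ?thesis using i by (simp add: \<omega>_eq level_outcome_def level_answer_def)
    next
      case False
      then have "level_vec Ys i \<le> l" using level_vec_le Ys assms(2) by simp
      then show ?thesis using i by (auto simp: \<omega>_eq cert_error_def)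
    qed
  qed
  then have "measure_pmf.prob ?M {\<omega>. \<exists>i. cert_answer \<omega> = Some (i, l)}
      \<le> measure_pmf.prob ?M (?H \<union> {\<omega>. cert_error \<omega>})"
    by (rule measure_pmf_mono_on_set_pmf)
  also have "\<dots> \<le> measure_pmf.prob ?M ?H + measure_pmf.prob ?M {\<omega>. cert_error \<omega>}"
    by (rule measure_Un_le) auto
  finally show ?thesis
    using assms(3) prob_cert_error_le[OF assms(1)] by (simp add: measure_map_pmf)
qed

text \<open>A certificate \<open>(i, l)\<close> with \<open>i \<in> X ! (l - 1)\<close> is wrong, as then \<open>level_vec X i \<ge> l\<close>.\<close>
lemma prob_level_outcome_wrong_le:
  assumes "cert_succeeds p c s D \<alpha> \<delta>" "1 \<le> l" "l < c"
  shows "measure_pmf.prob (map_pmf (level_outcome l) (cert_trial p c D))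
           {(x, I, r). \<exists>i. r = Some i \<and> i \<in> I \<and> x i} \<le> \<delta>"
proof -
  let ?M = "cert_trial p c D"
  have "level_outcome l -` {(x, I, r). \<exists>i. r = Some i \<and> i \<in> I \<and> x i} \<inter> set_pmf ?M
      \<subseteq> {\<omega>. cert_error \<omega>}"
  proof
    fix \<omega> assume \<omega>: "\<omega> \<in> level_outcome l -` {(x, I, r). \<exists>i. r = Some i \<and> i \<in> I \<and> x i} \<inter> set_pmf ?M"
    obtain Xs Ys sk Alg where \<omega>_eq: "\<omega> = (Xs, Ys, sk, Alg)" by (cases \<omega>)
    from \<omega> obtain i where i: "Alg (sk (level_vec Xs)) (sk (level_vec Ys)) = Some (i, l)"
      and "i \<in> Xs ! (l - 1)" and "Xs \<in> set_pmf (zeta_sets p c)"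
      by (auto simp: \<omega>_eq level_outcome_def level_answer_def set_pmf_cert_trial
               split: option.splits if_splits)
    then have "l - 1 < level_vec Xs i"
      using set_pmf_zeta_sets[of Xs p c] assms(3) by (intro level_vec_gt) auto
    then show "\<omega> \<in> {\<omega>. cert_error \<omega>}" using i by (auto simp: \<omega>_eq cert_error_def)
  qed
  then have "measure_pmf.prob ?M (level_outcome l -` {(x, I, r). \<exists>i. r = Some i \<and> i \<in> I \<and> x i})
      \<le> measure_pmf.prob ?M {\<omega>. cert_error \<omega>}"
    by (rule measure_pmf_mono_on_set_pmf)
  then show ?thesis
    using prob_cert_error_le[OF assms(1)] by (simp add: measure_map_pmf)
qed

lemma level_protocol_succeeds:
  assumes "cert_succeeds p c s D \<alpha> \<delta>" "p \<ge> 2" "r * (c - 1) = p - 2" "1 \<le> l" "l < c"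
    and "q \<le> measure_pmf.prob (cert_trial p c D) {\<omega>. \<exists>i. cert_answer \<omega> = Some (i, l)}"
  shows "rmi_succeeds (2 ^ (p - 1)) (2 ^ r) (2 ^ (r * (c - 1 - l))) s (level_protocol p c l D) (q - \<delta>) \<delta>"
  unfolding rmi_succeeds_def Let_def two_pow_level_mult[OF assms(4,5)] rmi_experiment_def[symmetric]
    rmi_experiment_level_protocol[OF assms(2-5)]
  using level_protocol_wf[OF assms(1-5)] prob_level_outcome_hit_ge[OF assms(1,5,6)]
    prob_level_outcome_wrong_le[OF assms(1,4,5)]
  by blast

lemma rmi_succeeds_mono:
  "rmi_succeeds d k t s Prot \<alpha> \<delta> \<Longrightarrow> \<alpha>' \<le> \<alpha> \<Longrightarrow> rmi_succeeds d k t s Prot \<alpha>' \<delta>"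
  unfolding rmi_succeeds_def Let_def by linarith

lemma one_div_8c_le:
  fixes c d \<delta> :: real
  assumes "2 \<le> c" "8 * c * (c - 1) \<le> d" "\<delta> \<le> 1 / d"
  shows "1 / (8 * c) \<le> 1 / 8 / (c - 1) - \<delta>"
proof -
  have "\<delta> \<le> 1 / (8 * c * (c - 1))"
    using assms by (smt (verit) frac_le mult_pos_pos)
  also have "\<dots> = 1 / 8 / (c - 1) - 1 / (8 * c)"
    using assms(1) by (simp add: field_simps)
  finally show ?thesis by simp
qed

lemma pow_mult_powr_inverse:
  fixes x :: real
  assumes "0 < x" "0 < m"
  shows "(x ^ (r * m)) powr (1 / real m) = x ^ r"
proof -
  have "(x ^ (r * m)) powr (1 / real m) = x powr (real (r * m) * (1 / real m))"
    using assms by (simp add: powr_powr flip: powr_realpow)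
  also have "real (r * m) * (1 / real m) = real r" using assms(2) by simp
  finally show ?thesis using assms(1) by (simp add: powr_realpow)
qed

theorem mainTheorem8:
  fixes p c s :: nat and \<delta> :: real and D :: "(sketch \<times> cert_alg) pmf"
  assumes "p \<ge> 2" and "c \<ge> 2"
    and "(c - 1) dvd (p - 2)" and "(p - 2) div (c - 1) > 0"
    and "2 ^ (p - 1) \<ge> 8 * c * (c - 1)"
    and "cert_succeeds p c s D (1/8) \<delta>"
    and "\<delta> \<le> 1 / real (2 ^ (p - 1))"
  shows "\<exists>k t (Prot :: (alice \<times> bob) pmf). k > 0 \<and> t > 0 \<and>
           real k \<ge> (real (2 ^ (p - 1)) / 2) powr (1 / (real c - 1)) \<and>
           2 * (k * t) \<le> 2 ^ (p - 1) \<and>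
           rmi_succeeds (2 ^ (p - 1)) k t s Prot (1 / (8 * real c)) \<delta>"
proof -
  define r where "r = (p - 2) div (c - 1)"
  have r: "r * (c - 1) = p - 2" using assms(3) by (simp add: r_def)
  obtain l where l: "1 \<le> l" "l < c"
    and ql: "1 / 8 / (real c - 1) \<le> measure_pmf.prob (cert_trial p c D) {\<omega>. \<exists>i. cert_answer \<omega> = Some (i, l)}"
    using exists_level_with_answer_prob_ge[OF assms(6,2)] assms(2) by fastforce
  have "real (8 * c * (c - 1)) \<le> real (2 ^ (p - 1))" using assms(5) by (simp only: of_nat_le_iff)
  then have "1 / (8 * real c) \<le> 1 / 8 / (real c - 1) - \<delta>"
    using assms(2,7) by (intro one_div_8c_le) (simp_all add: of_nat_diff)
  with level_protocol_succeeds[OF assms(6,1) r l ql]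
  have rmi: "rmi_succeeds (2 ^ (p - 1)) (2 ^ r) (2 ^ (r * (c - 1 - l))) s (level_protocol p c l D)
      (1 / (8 * real c)) \<delta>"
    by (rule rmi_succeeds_mono)
  have k: "(real (2 ^ (p - 1)) / 2) powr (1 / (real c - 1)) = real (2 ^ r)"
  proof -
    have "p - 1 = Suc (r * (c - 1))" using assms(1) r by simp
    then have "real (2 ^ (p - 1)) / 2 = 2 ^ (r * (c - 1))" by simp
    then show ?thesis using pow_mult_powr_inverse[of 2 "c - 1" r] assms(2) by (simp add: of_nat_diff)
  qed
  have kt: "2 * (2 ^ r * 2 ^ (r * (c - 1 - l))) \<le> (2::nat) ^ (p - 1)"
  proof -
    have "(2::nat) ^ r * 2 ^ (r * (c - 1 - l)) \<le> 2 ^ (p - 2)"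
      unfolding two_pow_level_mult[OF l] using l(1) by (intro two_pow_level_le[OF r]) simp
    moreover have "p - 1 = Suc (p - 2)" using assms(1) by simp
    ultimately show ?thesis by simp
  qed
  show ?thesis
  proof (intro exI conjI)
    show "(real (2 ^ (p - 1)) / 2) powr (1 / (real c - 1)) \<le> real ((2::nat) ^ r)" by (simp only: k order_refl)
  qed (use rmi kt in simp_all)
qed

end
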